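(* Let $n\ge 3$ be odd and let $D_{2n}$ be the dihedral group of order $2n$. Every indecomposable cycle set $X$ whose permutation group $G(X)$ is isomorphic to $D_{2n}$ satisfies $|X|=2n$.
   Context: A cycle set is a set $X$ with a binary operation $\cdot$ such that for every $x\in X$ the map $\sigma(x)\colon X\to X$, $y\mapsto x\cdot y$, is bijective, and $(x\cdot y)\cdot(x\cdot z)=(y\cdot x)\cdot(y\cdot z)$ for all $x,y,z\in X$. The permutation group $G(X)$ is the subgroup of the symmetric group on $X$ generated by all $\sigma(x)$, $x\in X$. The cycle set $X$ is indecomposable if $G(X)$ acts transitively on $X$ (equivalently, $X$ is not the disjoint union of two nonempty $G(X)$-invariant subsets). *)

theory Defs
  imports "HOL-Algebra.Algebra"
begin

definition cycle_set :: "'a set \<Rightarrow> ('a \<Rightarrow> 'a \<Rightarrow> 'a) \<Rightarrow> bool" where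
  "cycle_set A mu \<longleftrightarrow>
     (\<forall>x\<in>A. \<forall>y\<in>A. mu x y \<in> A) \<and>
     (\<forall>x\<in>A. bij_betw (mu x) A A) \<and>
     (\<forall>x\<in>A. \<forall>y\<in>A. \<forall>z\<in>A. mu (mu x y) (mu x z) = mu (mu y x) (mu y z))"

definition cs_sigma :: "'a set \<Rightarrow> ('a \<Rightarrow> 'a \<Rightarrow> 'a) \<Rightarrow> 'a \<Rightarrow> ('a \<Rightarrow> 'a)" where
  "cs_sigma A mu x = (\<lambda>y\<in>A. mu x y)"

definition perm_group :: "'a set \<Rightarrow> ('a \<Rightarrow> 'a \<Rightarrow> 'a) \<Rightarrow> ('a \<Rightarrow> 'a) monoid" where
  "perm_group A mu =
     (BijGroup A)\<lparr>carrier := generate (BijGroup A) (cs_sigma A mu ` A)\<rparr>"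

definition indecomposable :: "'a set \<Rightarrow> ('a \<Rightarrow> 'a \<Rightarrow> 'a) \<Rightarrow> bool" where
  "indecomposable A mu \<longleftrightarrow>
     (\<forall>x\<in>A. \<forall>y\<in>A. \<exists>g\<in>carrier (perm_group A mu). g x = y)"

text \<open>The dihedral group of order 2n: elements r^k s^b with k in {0..<n}, b :: bool,
  multiplication (r^a s^b)(r^c s^d) = r^(a + (-1)^b c) s^(b+d).\<close>
definition dihedral_group :: "nat \<Rightarrow> (nat \<times> bool) monoid" where
  "dihedral_group n =
     \<lparr>carrier = {0..<n} \<times> UNIV,
      monoid.mult = (\<lambda>(a, b) (c, d). ((if b then a + (n - c) else a + c) mod n, b \<noteq> d)),
      one = (0, False)\<rparr>"

end

(*
  The permutation group G = G(X) carries a left brace structure. With tau x the inverse of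
  sigma x, the products tau_prod of words over X only depend on the multiset of letters, so
  concatenation of words induces a commutative addition on G, twisted from the multiplication by
  maps lambda_g with lambda_g (tau x) = tau (g x). The additive group has order 2n with n odd, so
  a |-> n a is a lambda-invariant additive character with values in Z/2; transitivity makes
  it nontrivial on every tau x, hence on the sum t of all tau x exactly when |X| is odd.

  Rotations fixing a point are trivial. If a reflection s fixed a point, the rotations would act
  regularly, so |X| = n would be odd and t would be a reflection (rotations are squares).
  Being conjugate to s, t fixes some z, hence commutes with tau z; as the centralizer of a
  reflection is {1, t}, every tau y lies in {1, t}, forcing |G| <= 2. So G acts regularly
  and |X| = |G| = 2n.
*)
theory Submission
  imports Defs
begin

section \<open>Arithmetic in the dihedral group\<close>

lemma dihedral_mult [simp]:
  "(a, b) \<otimes>\<^bsub>dihedral_group n\<^esub> (c, d) = ((if b then a + (n - c) else a + c) mod n, b \<noteq> d)"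
  by (simp add: dihedral_group_def)

lemma dihedral_carrier: "carrier (dihedral_group n) = {0..<n} \<times> UNIV"
  by (simp add: dihedral_group_def)

lemma double_times_half_mod:
  fixes x n :: nat
  assumes "odd n"
  shows "(2 * x * ((n + 1) div 2)) mod n = x mod n"
proof -
  have "2 * x * ((n + 1) div 2) = x * n + x" using assms by (auto elim!: oddE)
  then show ?thesis by simp
qed

lemma exists_half_mod:
  fixes x n :: nat
  assumes "odd n"
  shows "\<exists>c<n. (2 * c) mod n = x mod n"
proof
  let ?c = "(x * ((n + 1) div 2)) mod n"
  have "n > 0" using assms by presburger
  moreover have "(2 * ?c) mod n = x mod n"
    using double_times_half_mod[OF assms, of x] by (simp add: mod_mult_right_eq mult.assoc)
  ultimately show "?c < n \<and> (2 * ?c) mod n = x mod n" by simp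
qed

lemma mod_eq_iff_int_dvd: "(x::nat) mod n = y mod n \<longleftrightarrow> int n dvd int x - int y"
  by (metis mod_eq_dvd_iff of_nat_eq_iff of_nat_mod)

lemma odd_dvd_double_imp_dvd: "odd n \<Longrightarrow> int n dvd 2 * z \<Longrightarrow> int n dvd z"
  by (simp add: coprime_dvd_mult_right_iff)

lemma dvd_imp_eq_0_if_abs_less: "int n dvd z \<Longrightarrow> \<bar>z\<bar> < int n \<Longrightarrow> z = 0"
  using dvd_imp_le_int[of z "int n"] by auto

lemma dihedral_rotation_commute_or_invert:
  assumes "a < n" "c < n"
  shows "(a, False) \<otimes>\<^bsub>dihedral_group n\<^esub> (c, d) = (c, d) \<otimes>\<^bsub>dihedral_group n\<^esub> (a, False) \<or>
    (a, False) \<otimes>\<^bsub>dihedral_group n\<^esub> ((c, d) \<otimes>\<^bsub>dihedral_group n\<^esub> (a, False)) = (c, d)"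
proof (cases d)
  case True
  have "(a + (c + (n - a)) mod n) mod n = (c + n) mod n"
    using assms(1) by (simp add: mod_add_right_eq)
  then show ?thesis using True assms by simp
qed (simp add: add.commute)

lemma dihedral_centralizer_reflection:
  assumes "odd n" "a < n" "c < n"
    and "(c, d) \<otimes>\<^bsub>dihedral_group n\<^esub> (a, True) = (a, True) \<otimes>\<^bsub>dihedral_group n\<^esub> (c, d)"
  shows "(c, d) = (0, False) \<or> (c, d) = (a, True)"
proof (cases d)
  case False
  then have "int n dvd int (c + a) - int (a + (n - c))"
    using assms(4) by (simp add: mod_eq_iff_int_dvd)
  also have "int (c + a) - int (a + (n - c)) = 2 * int c - int n"
    using assms(3) by (simp add: of_nat_diff)
  finally have "int n dvd 2 * int c"
    by (metis diff_add_cancel dvd_add_triv_right_iff)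
  then have "int c = 0"
    by (rule dvd_imp_eq_0_if_abs_less[OF odd_dvd_double_imp_dvd[OF assms(1)]]) (use assms(3) in auto)
  then show ?thesis using False by simp
next
  case True
  then have "int n dvd int (c + (n - a)) - int (a + (n - c))"
    using assms(4) by (simp add: mod_eq_iff_int_dvd)
  also have "int (c + (n - a)) - int (a + (n - c)) = 2 * (int c - int a)"
    using assms(2,3) by (simp add: of_nat_diff)
  finally have "int c - int a = 0"
    by (rule dvd_imp_eq_0_if_abs_less[OF odd_dvd_double_imp_dvd[OF assms(1)]]) (use assms(2,3) in auto)
  then show ?thesis using True by simp
qed

lemma dihedral_reflections_conjugate:
  assumes "odd n" "a < n" "b < n"
  shows "\<exists>c<n. (c, False) \<otimes>\<^bsub>dihedral_group n\<^esub> (a, True) = (b, True) \<otimes>\<^bsub>dihedral_group n\<^esub> (c, False)"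
proof -
  obtain c where c: "c < n" "(2 * c) mod n = (b + n - a) mod n"
    using exists_half_mod[OF assms(1)] by blast
  from c(2) have "int n dvd int (2 * c) - int (b + n - a)"
    by (simp only: mod_eq_iff_int_dvd)
  also have "int (2 * c) - int (b + n - a) = int (c + a) - int (b + (n - c))"
    using assms(2) c(1) by (simp add: of_nat_diff)
  finally have "(c + a) mod n = (b + (n - c)) mod n"
    by (simp only: mod_eq_iff_int_dvd)
  then show ?thesis using c(1) by (intro exI[of _ c]) simp
qed

lemma dihedral_rotation_square:
  assumes "odd n" "a < n"
  shows "\<exists>c<n. (c, False) \<otimes>\<^bsub>dihedral_group n\<^esub> (c, False) = (a, False)"
  using exists_half_mod[OF assms(1), of a] assms(2) by (auto simp: mult_2)

lemma dihedral_idempotent: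
  "a < n \<Longrightarrow> (a, b) \<otimes>\<^bsub>dihedral_group n\<^esub> (a, b) = (a, b) \<Longrightarrow> (a, b) = (0, False)"
  by (cases b; cases "a + a < n") (auto simp: le_mod_geq)

section \<open>Groups isomorphic to a dihedral group\<close>

locale dihedral_iso = group G for G (structure) +
  fixes n :: nat and h
  assumes h_iso: "h \<in> iso G (dihedral_group n)"
begin

abbreviation (input) D where "D \<equiv> dihedral_group n"

definition rotation where "rotation g \<longleftrightarrow> \<not> snd (h g)"

definition exponent where "exponent g = fst (h g)"

lemma h_apply: "h g = (exponent g, \<not> rotation g)"
  by (simp add: rotation_def exponent_def)

lemma h_bij: "bij_betw h (carrier G) ({0..<n} \<times> UNIV)"
  using h_iso by (simp add: iso_def dihedral_carrier)

lemma card_carrier: "card (carrier G) = 2 * n"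
  using bij_betw_same_card[OF h_bij] by (simp add: card_cartesian_product)

lemma finite_carrier: "finite (carrier G)"
  using bij_betw_finite[OF h_bij] by simp

lemma h_mult: "g \<in> carrier G \<Longrightarrow> k \<in> carrier G \<Longrightarrow> h (g \<otimes> k) = h g \<otimes>\<^bsub>D\<^esub> h k"
  using h_iso by (simp add: iso_def hom_def)

lemma h_eq_iff: "g \<in> carrier G \<Longrightarrow> k \<in> carrier G \<Longrightarrow> h g = h k \<longleftrightarrow> g = k"
  using h_bij by (auto simp: bij_betw_def inj_on_def)

lemma exponent_less: "g \<in> carrier G \<Longrightarrow> exponent g < n"
  using bij_betwE[OF h_bij] by (force simp: exponent_def)

lemma h_surj:
  assumes "a < n"
  obtains g where "g \<in> carrier G" "exponent g = a" "rotation g = b"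
proof -
  have "(a, \<not> b) \<in> h ` carrier G" using h_bij assms by (simp add: bij_betw_def)
  then show ?thesis using that by (auto simp: h_apply)
qed

lemma h_one: "h \<one> = (0, False)"
proof -
  have "h \<one> \<otimes>\<^bsub>D\<^esub> h \<one> = h \<one>" by (metis h_mult l_one one_closed)
  then show ?thesis by (metis dihedral_idempotent exponent_less h_apply one_closed)
qed

lemma rotation_mult:
  "g \<in> carrier G \<Longrightarrow> k \<in> carrier G \<Longrightarrow> rotation (g \<otimes> k) \<longleftrightarrow> (rotation g \<longleftrightarrow> rotation k)"
  using h_mult[of g k] by (auto simp: h_apply)

lemma rotation_one: "rotation \<one>"
  using h_one by (simp add: h_apply)

lemma rotation_inv: "g \<in> carrier G \<Longrightarrow> rotation (inv g) \<longleftrightarrow> rotation g"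
  using rotation_mult[of g "inv g"] rotation_one by auto

lemma rotation_commute_or_invert:
  assumes "rotation r" "r \<in> carrier G" "g \<in> carrier G"
  shows "r \<otimes> g = g \<otimes> r \<or> r \<otimes> (g \<otimes> r) = g"
proof -
  have "h r \<otimes>\<^bsub>D\<^esub> h g = h g \<otimes>\<^bsub>D\<^esub> h r \<or> h r \<otimes>\<^bsub>D\<^esub> (h g \<otimes>\<^bsub>D\<^esub> h r) = h g"
    using dihedral_rotation_commute_or_invert[OF exponent_less[OF assms(2)] exponent_less[OF assms(3)],
        of "\<not> rotation g"] assms(1)
    by (simp only: h_apply simp_thms)
  then show ?thesis using assms(2,3) by (simp add: h_mult[symmetric] h_eq_iff)
qed

lemma reflection_square:
  assumes "\<not> rotation s" "s \<in> carrier G"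
  shows "s \<otimes> s = \<one>"
proof -
  have "h (s \<otimes> s) = h \<one>"
    using assms exponent_less[OF assms(2)] by (simp add: h_mult h_apply[of s] h_one)
  then show ?thesis using assms(2) by (simp add: h_eq_iff)
qed

lemma reflections_conjugate:
  assumes "odd n" "\<not> rotation s" "s \<in> carrier G" "\<not> rotation t" "t \<in> carrier G"
  obtains k where "k \<in> carrier G" "k \<otimes> s = t \<otimes> k"
proof -
  obtain c where "c < n"
    and c: "(c, False) \<otimes>\<^bsub>D\<^esub> (exponent s, True) = (exponent t, True) \<otimes>\<^bsub>D\<^esub> (c, False)"
    using dihedral_reflections_conjugate[OF assms(1) exponent_less exponent_less] assms(3,5) by blast
  obtain k where k: "k \<in> carrier G" "exponent k = c" "rotation k"
    using h_surj[OF \<open>c < n\<close>] by metis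
  have "h (k \<otimes> s) = h (t \<otimes> k)"
    using assms(2-5) k c by (simp only: h_mult h_apply[of k] h_apply[of s] h_apply[of t] simp_thms)
  then show ?thesis using that k(1) assms(3,5) by (simp add: h_eq_iff)
qed

lemma centralizer_reflection:
  assumes "odd n" "\<not> rotation s" "s \<in> carrier G" "g \<in> carrier G" "s \<otimes> g = g \<otimes> s"
  shows "g = \<one> \<or> g = s"
proof -
  have "h g \<otimes>\<^bsub>D\<^esub> h s = h s \<otimes>\<^bsub>D\<^esub> h g" using assms(3-5) by (simp add: h_mult[symmetric])
  then have "h g = (0, False) \<or> h g = h s"
    using dihedral_centralizer_reflection[OF assms(1) exponent_less[OF assms(3)] exponent_less[OF assms(4)],
        of "\<not> rotation g"] assms(2)
    by (simp only: h_apply simp_thms)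
  then show ?thesis using assms(3,4) by (metis h_eq_iff h_one one_closed)
qed

lemma rotation_square:
  assumes "odd n" "rotation r" "r \<in> carrier G"
  obtains c where "c \<in> carrier G" "r = c \<otimes> c"
proof -
  obtain a where "a < n" and a: "(a, False) \<otimes>\<^bsub>D\<^esub> (a, False) = (exponent r, False)"
    using dihedral_rotation_square[OF assms(1) exponent_less[OF assms(3)]] by blast
  obtain c where c: "c \<in> carrier G" "exponent c = a" "rotation c"
    using h_surj[OF \<open>a < n\<close>] by metis
  have "h r = h (c \<otimes> c)"
    using assms(2) c a by (simp only: h_mult h_apply[of c] h_apply[of r] simp_thms)
  then show ?thesis using that c(1) assms(3) by (simp add: h_eq_iff)
qed

lemma card_rotations: "card {g \<in> carrier G. rotation g} = n"
proof -
  have "h ` {g \<in> carrier G. rotation g} = {0..<n} \<times> {False}"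
  proof (intro equalityI subsetI)
    fix x assume "x \<in> {0..<n} \<times> {False}"
    then obtain g where "g \<in> carrier G" "exponent g = fst x" "rotation g" "snd x = False"
      using h_surj[of "fst x" True] by force
    then show "x \<in> h ` {g \<in> carrier G. rotation g}"
      by (auto simp: h_apply prod_eq_iff intro!: image_eqI[of _ _ g])
  qed (auto simp: h_apply exponent_less)
  moreover have "inj_on h {g \<in> carrier G. rotation g}"
    using h_bij by (auto simp: bij_betw_def inj_on_def)
  ultimately have "card {g \<in> carrier G. rotation g} = card ({0..<n} \<times> {False})"
    by (metis card_image)
  then show ?thesis by (simp add: card_cartesian_product)
qed

lemma subgroup_rotations: "subgroup {g \<in> carrier G. rotation g} G"
  by (rule subgroupI) (auto simp: rotation_mult rotation_inv rotation_one)

end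

section \<open>Finite groups\<close>

lemma (in group) inv_eq_pow_order_minus_one:
  assumes "finite (carrier G)" "x \<in> carrier G"
  shows "inv x = x [^] (order G - 1)"
proof (rule inv_equality)
  have "order G > 0" using assms by (auto simp: order_gt_0_iff_finite)
  then show "x [^] (order G - 1) \<otimes> x = \<one>"
    using pow_order_eq_1[OF assms(2)] nat_pow_Suc[of x "order G - 1"] by simp
qed (use assms in simp_all)

context comm_group
begin

lemma self_inverse_unique:
  assumes "order G = 2 * n" "odd n"
    and "a \<in> carrier G" "a \<otimes> a = \<one>" "a \<noteq> \<one>"
    and "b \<in> carrier G" "b \<otimes> b = \<one>" "b \<noteq> \<one>"
  shows "a = b"
proof (rule ccontr)
  assume "a \<noteq> b"
  let ?K = "{\<one>, a, b, a \<otimes> b}"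
  have aa: "a \<otimes> (a \<otimes> x) = x" and bb: "b \<otimes> (b \<otimes> x) = x" if "x \<in> carrier G" for x
    using assms that by (simp_all add: m_assoc[symmetric])
  have "subgroup ?K G"
  proof (rule subgroupI)
    fix x assume "x \<in> ?K"
    then have "x \<otimes> x = \<one>" using assms by (auto simp: m_ac aa)
    then have "inv x = x" using \<open>x \<in> ?K\<close> assms by (auto intro: inv_equality)
    then show "inv x \<in> ?K" using \<open>x \<in> ?K\<close> by simp
  next
    fix x y assume "x \<in> ?K" "y \<in> ?K"
    then show "x \<otimes> y \<in> ?K" using assms by (auto simp: m_ac aa bb)
  qed (use assms in auto)
  moreover have "a \<otimes> b \<notin> {\<one>, a, b}"
    using assms \<open>a \<noteq> b\<close> aa[of b] by (auto simp: l_cancel_one' r_cancel_one')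
  then have "card ?K = 4"
    using assms \<open>a \<noteq> b\<close> by (simp add: card_insert_if)
  ultimately have "4 dvd order G" by (metis dvd_triv_right lagrange)
  then show False using assms(1,2) by presburger
qed

lemma pow_half_order_square:
  assumes "order G = 2 * n" "x \<in> carrier G"
  shows "x [^] n \<otimes> x [^] n = \<one>"
  using pow_order_eq_1[OF assms(2)] assms by (simp add: nat_pow_mult mult_2)

lemma pow_half_order_mult_eq_one_iff:
  assumes "order G = 2 * n" "odd n" "x \<in> carrier G" "y \<in> carrier G"
  shows "(x \<otimes> y) [^] n = \<one> \<longleftrightarrow> (x [^] n = \<one> \<longleftrightarrow> y [^] n = \<one>)"
proof (cases "x [^] n = \<one> \<or> y [^] n = \<one>")
  case True
  then show ?thesis using assms(3,4) by (auto simp: nat_pow_distrib)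
next
  case False
  then have "x [^] n = y [^] n"
    by (intro self_inverse_unique[OF assms(1,2) _ pow_half_order_square[OF assms(1,3)] _ _
          pow_half_order_square[OF assms(1,4)]]) (use assms(3,4) in auto)
  then show ?thesis
    using False pow_half_order_square[OF assms(1,3)] assms(3,4) by (simp add: nat_pow_distrib)
qed

lemma exists_pow_half_order_ne_one:
  assumes "order G = 2 * n" "odd n"
  obtains x where "x \<in> carrier G" "x [^] n \<noteq> \<one>"
proof -
  have "order G > 0" using assms by (simp add: odd_pos)
  then have "finite (carrier G)" by (simp add: order_gt_0_iff_finite)
  then obtain H where H: "subgroup H G" "card H = 2"
    using sylow_thm[of 2 G 1 n] assms(1) is_group by auto
  then obtain u v where uv: "H = {u, v}" "u \<noteq> v" by (auto simp: card_2_iff)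
  define t where "t = (if u = \<one> then v else u)"
  have t: "H = {\<one>, t}" "t \<noteq> \<one>"
    using subgroup.one_closed[OF H(1)] uv by (auto simp: t_def)
  have t_carrier: "t \<in> carrier G" using subgroup.subset[OF H(1)] t by auto
  have "t \<otimes> t \<in> H" using subgroup.m_closed[OF H(1)] t by auto
  then have tt: "t \<otimes> t = \<one>" using t t_carrier by (auto simp: l_cancel_one')
  obtain m where "n = Suc (2 * m)" using assms(2) oddE by fastforce
  then have "t [^] n = (t [^] (2::nat)) [^] m \<otimes> t" using t_carrier by (simp add: nat_pow_pow)
  also have "\<dots> = t" using tt t_carrier by (simp add: numeral_2_eq_2)
  finally show ?thesis using that t t_carrier by simp
qed

end

section \<open>The permutation group of a cycle set\<close>

locale perm_cycle_set =
  fixes A :: "'a set" and mu :: "'a \<Rightarrow> 'a \<Rightarrow> 'a"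
  assumes cycle_set: "cycle_set A mu"
begin

abbreviation PG where "PG \<equiv> perm_group A mu"
abbreviation \<sigma> where "\<sigma> \<equiv> cs_sigma A mu"
abbreviation \<tau> where "\<tau> x \<equiv> inv\<^bsub>PG\<^esub> (\<sigma> x)"

lemma mu_closed: "x \<in> A \<Longrightarrow> y \<in> A \<Longrightarrow> mu x y \<in> A"
  using cycle_set by (simp add: cycle_set_def)

lemma cycle_law: "x \<in> A \<Longrightarrow> y \<in> A \<Longrightarrow> z \<in> A \<Longrightarrow> mu (mu x y) (mu x z) = mu (mu y x) (mu y z)"
  using cycle_set by (simp add: cycle_set_def)

lemma sigma_in_Bij: "x \<in> A \<Longrightarrow> \<sigma> x \<in> Bij A"
  using cycle_set bij_betw_cong[of A "mu x" "\<sigma> x" A]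
  by (simp add: cycle_set_def Bij_def cs_sigma_def)

lemma subgroup_perm_group: "subgroup (carrier PG) (BijGroup A)"
proof -
  have "\<sigma> ` A \<subseteq> carrier (BijGroup A)" using sigma_in_Bij by (auto simp: BijGroup_def)
  then show ?thesis by (simp add: perm_group_def group.generate_is_subgroup[OF group_BijGroup])
qed

sublocale G: group PG
  using group.subgroup_imp_group[OF group_BijGroup subgroup_perm_group]
  by (simp add: perm_group_def)

lemma perm_in_Bij: "g \<in> carrier PG \<Longrightarrow> g \<in> Bij A"
  using subgroup.subset[OF subgroup_perm_group] by (auto simp: BijGroup_def)

lemma perm_closed: "g \<in> carrier PG \<Longrightarrow> x \<in> A \<Longrightarrow> g x \<in> A"
  using perm_in_Bij by (auto simp: Bij_def bij_betw_def)

lemma perm_mult_apply: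
  assumes "g \<in> carrier PG" "k \<in> carrier PG" "x \<in> A"
  shows "(g \<otimes>\<^bsub>PG\<^esub> k) x = g (k x)"
proof -
  have "g \<in> Bij A" "k \<in> Bij A" using assms perm_in_Bij by auto
  then have "g \<otimes>\<^bsub>PG\<^esub> k = compose A g k" by (simp add: perm_group_def BijGroup_def)
  then show ?thesis using assms(3) by (simp add: compose_def)
qed

lemma perm_one_apply: "x \<in> A \<Longrightarrow> \<one>\<^bsub>PG\<^esub> x = x"
  by (simp add: perm_group_def BijGroup_def)

lemma perm_inv_apply: "g \<in> carrier PG \<Longrightarrow> x \<in> A \<Longrightarrow> (inv\<^bsub>PG\<^esub> g) (g x) = x"
  using perm_mult_apply[of "inv\<^bsub>PG\<^esub> g" g x] by (simp add: perm_one_apply)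

lemma perm_eqI: "g \<in> carrier PG \<Longrightarrow> k \<in> carrier PG \<Longrightarrow> (\<And>x. x \<in> A \<Longrightarrow> g x = k x) \<Longrightarrow> g = k"
  using perm_in_Bij by (auto simp: Bij_def intro: extensionalityI)

lemma sigma_closed: "x \<in> A \<Longrightarrow> \<sigma> x \<in> carrier PG"
  by (simp add: perm_group_def generate.incl)

lemma sigma_apply [simp]: "y \<in> A \<Longrightarrow> \<sigma> x y = mu x y"
  by (simp add: cs_sigma_def)

lemma perm_group_induct [consumes 1, case_names one sigma tau mult]:
  assumes "g \<in> carrier PG" "P \<one>\<^bsub>PG\<^esub>"
    and "\<And>x. x \<in> A \<Longrightarrow> P (\<sigma> x)" "\<And>x. x \<in> A \<Longrightarrow> P (\<tau> x)"
    and "\<And>g k. g \<in> carrier PG \<Longrightarrow> k \<in> carrier PG \<Longrightarrow> P g \<Longrightarrow> P k \<Longrightarrow> P (g \<otimes>\<^bsub>PG\<^esub> k)"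
  shows "P g"
proof -
  have carrier_eq: "carrier PG = generate (BijGroup A) (\<sigma> ` A)"
    and one_eq: "\<one>\<^bsub>PG\<^esub> = \<one>\<^bsub>BijGroup A\<^esub>"
    and mult_eq: "\<And>g k. g \<otimes>\<^bsub>PG\<^esub> k = g \<otimes>\<^bsub>BijGroup A\<^esub> k"
    by (simp_all add: perm_group_def)
  have "g \<in> generate (BijGroup A) (\<sigma> ` A)" using assms(1) carrier_eq by simp
  then have "g \<in> carrier PG \<and> P g"
  proof (induction rule: generate.induct)
    case one
    then show ?case unfolding one_eq[symmetric] using assms(2) by simp
  next
    case (incl x)
    then show ?case using assms(3) sigma_closed by auto
  next
    case (inv h)
    then obtain x where "x \<in> A" "h = \<sigma> x" by blast
    moreover have "inv\<^bsub>BijGroup A\<^esub> \<sigma> x = \<tau> x"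
      using group.m_inv_consistent[OF group_BijGroup subgroup_perm_group] sigma_closed \<open>x \<in> A\<close>
      by (simp add: perm_group_def)
    ultimately show ?case using assms(4) sigma_closed by auto
  next
    case (eng g k)
    then show ?case using assms(5)[of g k] G.m_closed[of g k] by (simp add: mult_eq)
  qed
  then show ?thesis ..
qed

lemma sigma_cycle_law:
  "x \<in> A \<Longrightarrow> y \<in> A \<Longrightarrow> \<sigma> (mu x y) \<otimes>\<^bsub>PG\<^esub> \<sigma> x = \<sigma> (mu y x) \<otimes>\<^bsub>PG\<^esub> \<sigma> y"
  by (rule perm_eqI) (simp_all add: sigma_closed mu_closed perm_mult_apply cycle_law)

lemma tau_cycle_law:
  assumes "x \<in> A" "y \<in> A"
  shows "\<tau> x \<otimes>\<^bsub>PG\<^esub> \<tau> (mu x y) = \<tau> y \<otimes>\<^bsub>PG\<^esub> \<tau> (mu y x)"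
  using arg_cong[OF sigma_cycle_law[OF assms], of "m_inv PG"] assms
  by (simp add: G.inv_mult_group sigma_closed mu_closed)

(* By the cycle law, the value only depends on the multiset of letters (tau_prod_mset). *)
fun tau_prod :: "'a list \<Rightarrow> ('a \<Rightarrow> 'a)" where
  "tau_prod [] = \<one>\<^bsub>PG\<^esub>"
| tau_prod_Cons: "tau_prod (x # xs) = \<tau> x \<otimes>\<^bsub>PG\<^esub> tau_prod (map (mu x) xs)"

declare tau_prod_Cons [simp del]

lemma map_mu_closed: "x \<in> A \<Longrightarrow> set xs \<subseteq> A \<Longrightarrow> set (map (mu x) xs) \<subseteq> A"
  using mu_closed by auto

lemma map_perm_closed: "g \<in> carrier PG \<Longrightarrow> set xs \<subseteq> A \<Longrightarrow> set (map g xs) \<subseteq> A"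
  using perm_closed by auto

lemma tau_prod_closed: "set xs \<subseteq> A \<Longrightarrow> tau_prod xs \<in> carrier PG"
proof (induction xs rule: tau_prod.induct)
  case (2 x xs)
  then have "tau_prod (map (mu x) xs) \<in> carrier PG" using map_mu_closed by simp
  then show ?case using 2(2) by (simp add: tau_prod_Cons sigma_closed)
qed simp

lemma tau_prod_append:
  "set xs \<subseteq> A \<Longrightarrow> set ys \<subseteq> A \<Longrightarrow>
    tau_prod (xs @ ys) = tau_prod xs \<otimes>\<^bsub>PG\<^esub> tau_prod (map (inv\<^bsub>PG\<^esub> (tau_prod xs)) ys)"
proof (induction xs arbitrary: ys rule: tau_prod.induct)
  case 1
  then have "map (inv\<^bsub>PG\<^esub> \<one>\<^bsub>PG\<^esub>) ys = ys" by (induction ys) (auto simp: perm_one_apply)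
  then show ?case using 1 tau_prod_closed by simp
next
  case (2 x xs)
  let ?t = "tau_prod (map (mu x) xs)"
  have x: "x \<in> A" and t: "?t \<in> carrier PG"
    using 2(2) map_mu_closed tau_prod_closed by auto
  have "map (inv\<^bsub>PG\<^esub> ?t) (map (mu x) ys) = map (inv\<^bsub>PG\<^esub> (\<tau> x \<otimes>\<^bsub>PG\<^esub> ?t)) ys"
    using 2(3) t x by (auto simp: G.inv_mult_group sigma_closed perm_mult_apply)
  moreover have "tau_prod (map (inv\<^bsub>PG\<^esub> (\<tau> x \<otimes>\<^bsub>PG\<^esub> ?t)) ys) \<in> carrier PG"
    using 2(3) t x by (intro tau_prod_closed map_perm_closed) (simp_all add: sigma_closed)
  ultimately show ?case
    using 2 x t map_mu_closed[OF x] by (simp add: tau_prod_Cons G.m_assoc sigma_closed del: map_map)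
qed

lemma tau_prod_swap:
  assumes "x \<in> A" "y \<in> A" "set zs \<subseteq> A"
  shows "tau_prod (x # y # zs) = tau_prod (y # x # zs)"
proof -
  let ?xy = "map (mu (mu x y)) (map (mu x) zs)" and ?yx = "map (mu (mu y x)) (map (mu y) zs)"
  have "?xy = ?yx" using assms by (auto simp: cycle_law)
  moreover have "tau_prod ?xy \<in> carrier PG" "tau_prod ?yx \<in> carrier PG"
    by (intro tau_prod_closed map_mu_closed mu_closed; simp add: assms)+
  ultimately show ?thesis
    using tau_cycle_law[OF assms(1,2)] assms
    by (simp add: tau_prod_Cons G.m_assoc[symmetric] sigma_closed mu_closed del: map_map)
qed

lemma tau_prod_swap_mid:
  assumes "set us \<subseteq> A" "x \<in> A" "y \<in> A" "set zs \<subseteq> A"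
  shows "tau_prod (us @ x # y # zs) = tau_prod (us @ y # x # zs)"
proof -
  let ?g = "inv\<^bsub>PG\<^esub> (tau_prod us)"
  have g: "?g \<in> carrier PG" using assms(1) tau_prod_closed by simp
  have "tau_prod (?g x # ?g y # map ?g zs) = tau_prod (?g y # ?g x # map ?g zs)"
    by (rule tau_prod_swap) (use assms g in \<open>auto simp: perm_closed\<close>)
  then show ?thesis using tau_prod_append assms by simp
qed

lemma tau_prod_move_to_front:
  "set us \<subseteq> A \<Longrightarrow> x \<in> A \<Longrightarrow> set vs \<subseteq> A \<Longrightarrow> tau_prod (us @ x # vs) = tau_prod (x # us @ vs)"
proof (induction us arbitrary: vs rule: rev_induct)
  case (snoc u us)
  then have "tau_prod (us @ u # x # vs) = tau_prod (us @ x # u # vs)"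
    by (intro tau_prod_swap_mid) auto
  also have "\<dots> = tau_prod (x # us @ u # vs)" using snoc by simp
  finally show ?case by simp
qed simp

lemma tau_prod_mset:
  "mset xs = mset ys \<Longrightarrow> set xs \<subseteq> A \<Longrightarrow> tau_prod xs = tau_prod ys"
proof (induction "length xs" arbitrary: xs ys)
  case (Suc k)
  then obtain x xs' where xs: "xs = x # xs'" by (cases xs) auto
  then have "x \<in> set ys" using Suc.prems(1) by (metis list.set_intros(1) set_mset_mset)
  then obtain ys1 ys2 where ys: "ys = ys1 @ x # ys2" by (meson split_list)
  have "set ys \<subseteq> A" using Suc.prems by (metis mset_eq_setD)
  then have A: "x \<in> A" "set xs' \<subseteq> A" "set (ys1 @ ys2) \<subseteq> A"
    using Suc.prems(2) xs ys by auto
  have "tau_prod (map (mu x) xs') = tau_prod (map (mu x) (ys1 @ ys2))"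
    using Suc xs ys map_mu_closed[OF A(1,2)] by (intro Suc.hyps) simp_all
  then show ?case using xs ys A tau_prod_move_to_front by (simp add: tau_prod_Cons)
qed simp

lemma finite_if_indecomposable:
  assumes "indecomposable A mu" "finite (carrier PG)"
  shows "finite A"
proof (cases "A = {}")
  case False
  then obtain x where "x \<in> A" by blast
  then have "A \<subseteq> (\<lambda>g. g x) ` carrier PG" using assms(1) by (force simp: indecomposable_def)
  then show ?thesis using assms(2) finite_subset by blast
qed simp

lemma orbit_map_inj_on:
  assumes "subgroup H PG" "x \<in> A" "\<And>g. g \<in> H \<Longrightarrow> g x = x \<Longrightarrow> g = \<one>\<^bsub>PG\<^esub>"
  shows "inj_on (\<lambda>g. g x) H"
proof (rule inj_onI)
  fix g k assume gk: "g \<in> H" "k \<in> H" "g x = k x"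
  have carrier: "g \<in> carrier PG" "k \<in> carrier PG" using gk(1,2) subgroup.subset[OF assms(1)] by auto
  have "(inv\<^bsub>PG\<^esub> k \<otimes>\<^bsub>PG\<^esub> g) x = x"
    using carrier assms(2) gk(3) by (simp add: perm_mult_apply perm_inv_apply)
  moreover have "inv\<^bsub>PG\<^esub> k \<otimes>\<^bsub>PG\<^esub> g \<in> H"
    using gk(1,2) assms(1) by (simp add: subgroup.m_closed subgroup.m_inv_closed)
  ultimately have "inv\<^bsub>PG\<^esub> k \<otimes>\<^bsub>PG\<^esub> g = \<one>\<^bsub>PG\<^esub>" using assms(3) by blast
  then show "g = k" using carrier by (metis G.inv_solve_left' G.r_one G.one_closed)
qed

lemma carrier_subset_if_taus_in:
  assumes "j \<in> carrier PG" "j \<otimes>\<^bsub>PG\<^esub> j = \<one>\<^bsub>PG\<^esub>" "\<And>y. y \<in> A \<Longrightarrow> \<tau> y \<in> {\<one>\<^bsub>PG\<^esub>, j}"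
  shows "carrier PG \<subseteq> {\<one>\<^bsub>PG\<^esub>, j}"
proof
  fix g assume "g \<in> carrier PG"
  then show "g \<in> {\<one>\<^bsub>PG\<^esub>, j}"
  proof (induction rule: perm_group_induct)
    case (sigma y)
    have "inv\<^bsub>PG\<^esub> j = j" using assms(1,2) by (simp add: G.inv_equality)
    then show ?case using assms(3)[OF sigma] sigma_closed[OF sigma] by (auto simp: G.inv_inv[symmetric])
  qed (use assms in auto)
qed

end

section \<open>The brace structure on the permutation group\<close>

locale finite_perm_cycle_set = perm_cycle_set +
  assumes finite_A: "finite A"
begin

lemma finite_perm_group: "finite (carrier PG)"
proof (rule finite_subset)
  show "carrier PG \<subseteq> A \<rightarrow>\<^sub>E A"
  proof
    fix g assume "g \<in> carrier PG"
    then have "g \<in> Bij A" by (rule perm_in_Bij)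
    then show "g \<in> A \<rightarrow>\<^sub>E A" by (simp add: PiE_def Bij_imp_funcset Bij_imp_extensional)
  qed
qed (simp add: finite_PiE finite_A)

lemma tau_prod_mult:
  assumes "set xs \<subseteq> A" "set ys \<subseteq> A"
  shows "tau_prod xs \<otimes>\<^bsub>PG\<^esub> tau_prod ys = tau_prod (xs @ map (tau_prod xs) ys)"
proof -
  have "map (inv\<^bsub>PG\<^esub> (tau_prod xs)) (map (tau_prod xs) ys) = ys"
    using assms tau_prod_closed by (induction ys) (auto simp: perm_inv_apply)
  then show ?thesis
    using tau_prod_append[OF assms(1) map_perm_closed[OF tau_prod_closed[OF assms(1)] assms(2)]] by simp
qed

lemma tau_prod_surj:
  assumes "g \<in> carrier PG"
  obtains xs where "set xs \<subseteq> A" "g = tau_prod xs"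
proof -
  define W where "W = {tau_prod xs | xs. set xs \<subseteq> A}"
  have word: "tau_prod xs \<in> W" if "set xs \<subseteq> A" for xs
    using that unfolding W_def by blast
  have mult: "a \<otimes>\<^bsub>PG\<^esub> b \<in> W" if ab: "a \<in> W" "b \<in> W" for a b
  proof -
    obtain xs ys where xs: "set xs \<subseteq> A" "a = tau_prod xs" and ys: "set ys \<subseteq> A" "b = tau_prod ys"
      using ab by (auto simp: W_def)
    then have "a \<otimes>\<^bsub>PG\<^esub> b = tau_prod (xs @ map (tau_prod xs) ys)"
      using tau_prod_mult by simp
    moreover have "set (xs @ map (tau_prod xs) ys) \<subseteq> A"
      using xs ys map_perm_closed[OF tau_prod_closed] by simp
    ultimately show ?thesis using word by simp
  qed
  have one: "\<one>\<^bsub>PG\<^esub> \<in> W" using word[of "[]"] by simp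
  have tau: "\<tau> x \<in> W" if "x \<in> A" for x
    using word[of "[x]"] that sigma_closed by (simp add: tau_prod_Cons)
  have pow: "\<tau> x [^]\<^bsub>PG\<^esub> k \<in> W" if "x \<in> A" for x and k :: nat
    by (induction k) (simp_all add: one mult tau[OF that])
  have sigma: "\<sigma> x \<in> W" if "x \<in> A" for x
  proof -
    have "\<sigma> x = \<tau> x [^]\<^bsub>PG\<^esub> (order PG - 1)"
      using G.inv_eq_pow_order_minus_one[OF finite_perm_group G.inv_closed[OF sigma_closed[OF that]]]
      by (simp only: G.inv_inv[OF sigma_closed[OF that]])
    then show ?thesis using pow[OF that] by metis
  qed
  from assms have "g \<in> W"
    by (induction rule: perm_group_induct) (simp_all add: one sigma tau mult)
  then show ?thesis using that unfolding W_def by blast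
qed

(* The right-hand side depends on zs only through tau_prod zs: this makes lambda_map well defined. *)
lemma tau_prod_map:
  assumes "k \<in> carrier PG" "set zs \<subseteq> A" "set us \<subseteq> A" "tau_prod us = inv\<^bsub>PG\<^esub> k"
  shows "tau_prod (map k zs) =
    k \<otimes>\<^bsub>PG\<^esub> (tau_prod zs \<otimes>\<^bsub>PG\<^esub> tau_prod (map (inv\<^bsub>PG\<^esub> (tau_prod zs)) us))"
proof -
  have "inv\<^bsub>PG\<^esub> k \<otimes>\<^bsub>PG\<^esub> tau_prod (map k zs) = tau_prod (us @ zs)"
    using tau_prod_append[OF assms(3,2)] assms by simp
  also have "\<dots> = tau_prod (zs @ us)"
    using assms by (intro tau_prod_mset) (auto simp: union_commute)
  also have "\<dots> = tau_prod zs \<otimes>\<^bsub>PG\<^esub> tau_prod (map (inv\<^bsub>PG\<^esub> (tau_prod zs)) us)"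
    using tau_prod_append[OF assms(2,3)] .
  finally have "inv\<^bsub>PG\<^esub> k \<otimes>\<^bsub>PG\<^esub> tau_prod (map k zs) =
    tau_prod zs \<otimes>\<^bsub>PG\<^esub> tau_prod (map (inv\<^bsub>PG\<^esub> (tau_prod zs)) us)" .
  moreover have "tau_prod (map k zs) \<in> carrier PG"
    "tau_prod zs \<otimes>\<^bsub>PG\<^esub> tau_prod (map (inv\<^bsub>PG\<^esub> (tau_prod zs)) us) \<in> carrier PG"
    using assms tau_prod_closed map_perm_closed by (simp_all add: G.m_closed)
  ultimately show ?thesis using assms(1) by (simp add: G.inv_solve_left')
qed

lemma tau_prod_map_cong:
  assumes "k \<in> carrier PG" "set ys \<subseteq> A" "set ys' \<subseteq> A" "tau_prod ys = tau_prod ys'"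
  shows "tau_prod (map k ys) = tau_prod (map k ys')"
proof -
  obtain us where "set us \<subseteq> A" "tau_prod us = inv\<^bsub>PG\<^esub> k"
    using tau_prod_surj assms(1) by (metis G.inv_closed)
  then show ?thesis using tau_prod_map assms by simp
qed

definition word_of :: "('a \<Rightarrow> 'a) \<Rightarrow> 'a list" where
  "word_of g = (SOME xs. set xs \<subseteq> A \<and> g = tau_prod xs)"

lemma word_of: "g \<in> carrier PG \<Longrightarrow> set (word_of g) \<subseteq> A \<and> g = tau_prod (word_of g)"
  unfolding word_of_def by (rule someI_ex) (metis tau_prod_surj)

lemma set_word_of: "g \<in> carrier PG \<Longrightarrow> set (word_of g) \<subseteq> A"
  using word_of by blast

definition lambda_map :: "('a \<Rightarrow> 'a) \<Rightarrow> ('a \<Rightarrow> 'a) \<Rightarrow> ('a \<Rightarrow> 'a)" where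
  "lambda_map k g = tau_prod (map k (word_of g))"

definition brace_add :: "('a \<Rightarrow> 'a) \<Rightarrow> ('a \<Rightarrow> 'a) \<Rightarrow> ('a \<Rightarrow> 'a)" where
  "brace_add g h = g \<otimes>\<^bsub>PG\<^esub> lambda_map (inv\<^bsub>PG\<^esub> g) h"

definition additive_group :: "('a \<Rightarrow> 'a) monoid" where
  "additive_group = \<lparr>carrier = carrier PG, monoid.mult = brace_add, one = \<one>\<^bsub>PG\<^esub>\<rparr>"

lemma lambda_map_tau_prod:
  "k \<in> carrier PG \<Longrightarrow> set ys \<subseteq> A \<Longrightarrow> lambda_map k (tau_prod ys) = tau_prod (map k ys)"
  unfolding lambda_map_def using word_of tau_prod_closed by (metis tau_prod_map_cong)

lemma brace_add_tau_prod:
  "set xs \<subseteq> A \<Longrightarrow> set ys \<subseteq> A \<Longrightarrow> brace_add (tau_prod xs) (tau_prod ys) = tau_prod (xs @ ys)"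
  by (simp add: brace_add_def lambda_map_tau_prod tau_prod_append tau_prod_closed)

lemma brace_add_closed: "a \<in> carrier PG \<Longrightarrow> b \<in> carrier PG \<Longrightarrow> brace_add a b \<in> carrier PG"
  by (metis tau_prod_surj brace_add_tau_prod tau_prod_closed set_append Un_least)

lemma brace_add_assoc:
  assumes "a \<in> carrier PG" "b \<in> carrier PG" "c \<in> carrier PG"
  shows "brace_add (brace_add a b) c = brace_add a (brace_add b c)"
proof -
  obtain xs ys zs where "set xs \<subseteq> A" "set ys \<subseteq> A" "set zs \<subseteq> A"
    and "a = tau_prod xs" "b = tau_prod ys" "c = tau_prod zs"
    using assms by (metis tau_prod_surj)
  then show ?thesis by (simp add: brace_add_tau_prod)
qed

lemma brace_add_comm:
  assumes "a \<in> carrier PG" "b \<in> carrier PG"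
  shows "brace_add a b = brace_add b a"
proof -
  obtain xs ys where "set xs \<subseteq> A" "set ys \<subseteq> A" "a = tau_prod xs" "b = tau_prod ys"
    using assms by (metis tau_prod_surj)
  then show ?thesis
    using tau_prod_mset[of "xs @ ys" "ys @ xs"] by (simp add: brace_add_tau_prod union_commute)
qed

lemma brace_add_one_left: "a \<in> carrier PG \<Longrightarrow> brace_add \<one>\<^bsub>PG\<^esub> a = a"
  by (metis tau_prod_surj brace_add_tau_prod[of "[]"] append_Nil empty_set empty_subsetI tau_prod.simps(1))

lemma brace_add_inverse:
  assumes "a \<in> carrier PG"
  obtains b where "b \<in> carrier PG" "brace_add b a = \<one>\<^bsub>PG\<^esub>"
proof -
  obtain xs where xs: "set xs \<subseteq> A" "a = tau_prod xs" using assms tau_prod_surj by metis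
  obtain us where us: "set us \<subseteq> A" "inv\<^bsub>PG\<^esub> a = tau_prod us"
    using tau_prod_surj assms by (metis G.inv_closed)
  have ys: "set (map a us) \<subseteq> A" using map_perm_closed assms us(1) .
  have "map (inv\<^bsub>PG\<^esub> a) (map a us) = us" using us(1) assms by (induction us) (auto simp: perm_inv_apply)
  then have "brace_add a (tau_prod (map a us)) = a \<otimes>\<^bsub>PG\<^esub> inv\<^bsub>PG\<^esub> a"
    using xs ys us by (simp add: brace_add_tau_prod tau_prod_append)
  then show ?thesis
    using that[of "tau_prod (map a us)"] assms ys tau_prod_closed brace_add_comm by simp
qed

lemma additive_group_simps [simp]:
  "carrier additive_group = carrier PG"
  "a \<otimes>\<^bsub>additive_group\<^esub> b = brace_add a b"
  "\<one>\<^bsub>additive_group\<^esub> = \<one>\<^bsub>PG\<^esub>"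
  by (simp_all add: additive_group_def)

lemma comm_group_additive_group: "comm_group additive_group"
proof (rule comm_groupI)
  fix a b c
  assume "a \<in> carrier additive_group" "b \<in> carrier additive_group" "c \<in> carrier additive_group"
  then show "a \<otimes>\<^bsub>additive_group\<^esub> b \<otimes>\<^bsub>additive_group\<^esub> c =
      a \<otimes>\<^bsub>additive_group\<^esub> (b \<otimes>\<^bsub>additive_group\<^esub> c)"
    by (simp add: brace_add_assoc)
next
  fix a b assume "a \<in> carrier additive_group" "b \<in> carrier additive_group"
  then show "a \<otimes>\<^bsub>additive_group\<^esub> b = b \<otimes>\<^bsub>additive_group\<^esub> a"
    by (simp add: brace_add_comm)
next
  fix a assume "a \<in> carrier additive_group"
  then show "\<exists>b\<in>carrier additive_group. b \<otimes>\<^bsub>additive_group\<^esub> a = \<one>\<^bsub>additive_group\<^esub>"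
    by (auto elim: brace_add_inverse)
qed (simp_all add: brace_add_closed brace_add_one_left)

sublocale M: comm_group additive_group
  by (rule comm_group_additive_group)

lemma lambda_map_closed: "k \<in> carrier PG \<Longrightarrow> g \<in> carrier PG \<Longrightarrow> lambda_map k g \<in> carrier PG"
  unfolding lambda_map_def by (intro tau_prod_closed map_perm_closed set_word_of)

lemma lambda_map_brace_add:
  assumes "k \<in> carrier PG" "a \<in> carrier PG" "b \<in> carrier PG"
  shows "lambda_map k (brace_add a b) = brace_add (lambda_map k a) (lambda_map k b)"
proof -
  obtain xs ys where "set xs \<subseteq> A" "set ys \<subseteq> A" "a = tau_prod xs" "b = tau_prod ys"
    using assms by (metis tau_prod_surj)
  then show ?thesis
    using assms(1) map_perm_closed by (simp add: brace_add_tau_prod lambda_map_tau_prod)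
qed

lemma lambda_map_hom: "k \<in> carrier PG \<Longrightarrow> lambda_map k \<in> hom additive_group additive_group"
  by (rule homI) (simp_all add: lambda_map_closed lambda_map_brace_add)

lemma lambda_map_compose:
  assumes "k \<in> carrier PG" "k' \<in> carrier PG" "g \<in> carrier PG"
  shows "lambda_map k (lambda_map k' g) = lambda_map (k \<otimes>\<^bsub>PG\<^esub> k') g"
proof -
  obtain xs where xs: "set xs \<subseteq> A" "g = tau_prod xs" using assms(3) by (metis tau_prod_surj)
  then have "map k (map k' xs) = map (k \<otimes>\<^bsub>PG\<^esub> k') xs"
    using assms(1,2) by (induction xs) (auto simp: perm_mult_apply)
  then show ?thesis using xs assms map_perm_closed by (simp add: lambda_map_tau_prod del: map_map)
qed

lemma lambda_map_id: "g \<in> carrier PG \<Longrightarrow> lambda_map \<one>\<^bsub>PG\<^esub> g = g"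
proof -
  assume "g \<in> carrier PG"
  then obtain xs where xs: "set xs \<subseteq> A" "g = tau_prod xs" by (metis tau_prod_surj)
  have "map \<one>\<^bsub>PG\<^esub> xs = xs" using xs(1) by (induction xs) (auto simp: perm_one_apply)
  then show ?thesis using xs by (simp add: lambda_map_tau_prod)
qed

lemma lambda_map_one: "k \<in> carrier PG \<Longrightarrow> lambda_map k \<one>\<^bsub>PG\<^esub> = \<one>\<^bsub>PG\<^esub>"
  using lambda_map_tau_prod[of k "[]"] by simp

lemma lambda_map_tau: "k \<in> carrier PG \<Longrightarrow> x \<in> A \<Longrightarrow> lambda_map k (\<tau> x) = \<tau> (k x)"
  using lambda_map_tau_prod[of k "[x]"] perm_closed sigma_closed by (simp add: tau_prod_Cons)

lemma mult_eq_brace_add: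
  "g \<in> carrier PG \<Longrightarrow> h \<in> carrier PG \<Longrightarrow> g \<otimes>\<^bsub>PG\<^esub> h = brace_add g (lambda_map g h)"
  by (simp add: brace_add_def lambda_map_compose lambda_map_id)

definition tau_sum :: "'a \<Rightarrow> 'a" where
  "tau_sum = tau_prod (SOME xs. set xs = A \<and> distinct xs)"

lemma tau_sum_eq:
  assumes "set xs = A" "distinct xs"
  shows "tau_sum = tau_prod xs"
proof -
  let ?ys = "SOME xs. set xs = A \<and> distinct xs"
  have ys: "set ?ys = A \<and> distinct ?ys" by (rule someI[where x = xs]) (use assms in simp)
  have "mset ?ys = mset xs"
    by (rule set_eq_iff_mset_eq_distinct[THEN iffD1]) (use ys assms in simp_all)
  then show ?thesis using ys by (simp add: tau_sum_def tau_prod_mset)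
qed

lemma tau_sum_closed: "tau_sum \<in> carrier PG"
  using finite_distinct_list[OF finite_A] tau_sum_eq tau_prod_closed by force

lemma lambda_map_tau_sum: "k \<in> carrier PG \<Longrightarrow> lambda_map k tau_sum = tau_sum"
proof -
  assume k: "k \<in> carrier PG"
  obtain xs where xs: "set xs = A" "distinct xs" using finite_distinct_list[OF finite_A] by blast
  have "bij_betw k A A" using perm_in_Bij[OF k] by (simp add: Bij_def)
  then have kxs: "set (map k xs) = A" "distinct (map k xs)"
    using xs by (auto simp: bij_betw_def distinct_map)
  have "lambda_map k tau_sum = lambda_map k (tau_prod xs)" by (simp only: tau_sum_eq[OF xs])
  also have "\<dots> = tau_prod (map k xs)" using k xs(1) by (simp add: lambda_map_tau_prod)
  also have "\<dots> = tau_sum" using kxs by (rule tau_sum_eq[symmetric])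
  finally show ?thesis .
qed

lemma tau_sum_commute_tau:
  assumes "z \<in> A" "tau_sum z = z"
  shows "tau_sum \<otimes>\<^bsub>PG\<^esub> \<tau> z = \<tau> z \<otimes>\<^bsub>PG\<^esub> tau_sum"
proof -
  have "(inv\<^bsub>PG\<^esub> tau_sum) z = z" using perm_inv_apply[OF tau_sum_closed assms(1)] assms(2) by simp
  then have "lambda_map (inv\<^bsub>PG\<^esub> tau_sum) (\<tau> z) = \<tau> z"
    using lambda_map_tau[OF G.inv_closed[OF tau_sum_closed] assms(1)] by simp
  then have "brace_add tau_sum (\<tau> z) = tau_sum \<otimes>\<^bsub>PG\<^esub> \<tau> z" by (simp add: brace_add_def)
  moreover have "brace_add (\<tau> z) tau_sum = \<tau> z \<otimes>\<^bsub>PG\<^esub> tau_sum"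
    using assms(1) sigma_closed by (simp add: brace_add_def lambda_map_tau_sum)
  ultimately show ?thesis
    using brace_add_comm[OF tau_sum_closed G.inv_closed[OF sigma_closed[OF assms(1)]]] by simp
qed

lemma lambda_map_pow:
  assumes "k \<in> carrier PG" "a \<in> carrier PG"
  shows "lambda_map k (a [^]\<^bsub>additive_group\<^esub> (m::nat)) = lambda_map k a [^]\<^bsub>additive_group\<^esub> m"
  using hom_nat_pow[OF lambda_map_hom[OF assms(1)] _ M.is_group M.is_group] assms(2) by simp

lemma lambda_map_inv_cancel:
  "k \<in> carrier PG \<Longrightarrow> a \<in> carrier PG \<Longrightarrow> lambda_map (inv\<^bsub>PG\<^esub> k) (lambda_map k a) = a"
  by (simp add: lambda_map_compose lambda_map_id)

end

section \<open>Indecomposable cycle sets with dihedral permutation group\<close>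

locale dihedral_cycle_set = finite_perm_cycle_set A mu + dihedral_iso "perm_group A mu" n h
  for A :: "'a set" and mu n h +
  assumes odd_n: "odd n" and three_le_n: "3 \<le> n"
    and indecomposable: "indecomposable A mu"
begin

lemma transitive: "x \<in> A \<Longrightarrow> y \<in> A \<Longrightarrow> \<exists>k\<in>carrier PG. k x = y"
  using indecomposable by (simp add: indecomposable_def)

lemma order_additive_group: "order additive_group = 2 * n"
  using card_carrier by (simp add: order_def)

(* The projection of the additive group, of order 2n with n odd, onto its Sylow 2-subgroup. *)
definition parity :: "('a \<Rightarrow> 'a) \<Rightarrow> bool" where
  "parity a \<longleftrightarrow> a [^]\<^bsub>additive_group\<^esub> n \<noteq> \<one>\<^bsub>PG\<^esub>"

lemma parity_brace_add:
  "a \<in> carrier PG \<Longrightarrow> b \<in> carrier PG \<Longrightarrow> parity (brace_add a b) \<longleftrightarrow> parity a \<noteq> parity b"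
  using M.pow_half_order_mult_eq_one_iff[OF order_additive_group odd_n] by (simp add: parity_def)

lemma parity_lambda_map:
  assumes "k \<in> carrier PG" "a \<in> carrier PG"
  shows "parity (lambda_map k a) \<longleftrightarrow> parity a"
proof -
  have "a [^]\<^bsub>additive_group\<^esub> n = lambda_map (inv\<^bsub>PG\<^esub> k) (lambda_map k a [^]\<^bsub>additive_group\<^esub> n)"
    using assms by (simp add: lambda_map_pow lambda_map_inv_cancel lambda_map_closed)
  then show ?thesis using assms
    by (auto simp: parity_def lambda_map_pow[symmetric] lambda_map_one)
qed

lemma parity_mult:
  "g \<in> carrier PG \<Longrightarrow> k \<in> carrier PG \<Longrightarrow> parity (g \<otimes>\<^bsub>PG\<^esub> k) \<longleftrightarrow> parity g \<noteq> parity k"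
  by (simp add: mult_eq_brace_add parity_brace_add parity_lambda_map lambda_map_closed)

lemma not_parity_one: "\<not> parity \<one>\<^bsub>PG\<^esub>"
  using M.nat_pow_one by (simp add: parity_def)

lemma parity_tau: "x \<in> A \<Longrightarrow> parity (\<tau> x)"
proof (rule ccontr)
  assume x: "x \<in> A" "\<not> parity (\<tau> x)"
  have tau: "\<not> parity (\<tau> y)" if y: "y \<in> A" for y
  proof -
    obtain k where "k \<in> carrier PG" "k x = y" using transitive[OF x(1) y] by blast
    then show ?thesis using x lambda_map_tau parity_lambda_map sigma_closed by (metis G.inv_closed)
  qed
  have sigma: "\<not> parity (\<sigma> y)" if "y \<in> A" for y
    using parity_mult[of "\<sigma> y" "\<tau> y"] tau[OF that] sigma_closed[OF that] not_parity_one by simp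
  have "\<not> parity g" if "g \<in> carrier PG" for g
    using that by (induction rule: perm_group_induct) (simp_all add: not_parity_one sigma tau parity_mult)
  moreover obtain g where "g \<in> carrier PG" "g [^]\<^bsub>additive_group\<^esub> n \<noteq> \<one>\<^bsub>PG\<^esub>"
    using M.exists_pow_half_order_ne_one[OF order_additive_group odd_n] by auto
  ultimately show False by (simp add: parity_def)
qed

lemma parity_tau_prod: "set xs \<subseteq> A \<Longrightarrow> parity (tau_prod xs) \<longleftrightarrow> odd (length xs)"
proof (induction xs rule: tau_prod.induct)
  case (2 x xs)
  then show ?case using map_mu_closed[of x xs] tau_prod_closed
    by (simp add: tau_prod_Cons parity_mult parity_tau sigma_closed)
qed (simp add: not_parity_one)

lemma parity_tau_sum: "parity tau_sum \<longleftrightarrow> odd (card A)"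
proof -
  obtain xs where "set xs = A" "distinct xs" using finite_distinct_list[OF finite_A] by blast
  then show ?thesis using tau_sum_eq parity_tau_prod distinct_card by fastforce
qed

lemma rotation_fixing_point_eq_one:
  assumes "rotation r" "r \<in> carrier PG" "x \<in> A" "r x = x"
  shows "r = \<one>\<^bsub>PG\<^esub>"
proof (rule perm_eqI)
  fix y assume "y \<in> A"
  then obtain k where k: "k \<in> carrier PG" "k x = y" using transitive[OF assms(3)] by blast
  from rotation_commute_or_invert[OF assms(1,2) k(1)] show "r y = \<one>\<^bsub>PG\<^esub> y"
  proof
    assume "r \<otimes>\<^bsub>PG\<^esub> k = k \<otimes>\<^bsub>PG\<^esub> r"
    then have "r (k x) = k (r x)" using assms(2,3) k(1) by (metis perm_mult_apply)
    then show ?thesis using assms(4) k \<open>y \<in> A\<close> by (simp add: perm_one_apply)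
  next
    assume "r \<otimes>\<^bsub>PG\<^esub> (k \<otimes>\<^bsub>PG\<^esub> r) = k"
    then have "r (k (r x)) = k x" using assms(2,3) k(1) by (metis perm_mult_apply perm_closed G.m_closed)
    then show ?thesis using assms(4) k \<open>y \<in> A\<close> by (simp add: perm_one_apply)
  qed
qed (use assms(2) in simp_all)

lemma card_eq_n_if_reflection_fixes_point:
  assumes "\<not> rotation s" "s \<in> carrier PG" "x \<in> A" "s x = x"
  shows "card A = n"
proof -
  let ?R = "{r \<in> carrier PG. rotation r}"
  have "inj_on (\<lambda>r. r x) ?R"
    using subgroup_rotations assms(3) rotation_fixing_point_eq_one by (intro orbit_map_inj_on) auto
  moreover have "(\<lambda>r. r x) ` ?R = A"
  proof (intro equalityI subsetI)
    fix y assume "y \<in> A"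
    then obtain k where k: "k \<in> carrier PG" "k x = y" using transitive[OF assms(3)] by blast
    show "y \<in> (\<lambda>r. r x) ` ?R"
    proof (cases "rotation k")
      case False
      then have "rotation (k \<otimes>\<^bsub>PG\<^esub> s)" using assms(1,2) k(1) by (simp add: rotation_mult)
      moreover have "(k \<otimes>\<^bsub>PG\<^esub> s) x = y" using assms k by (simp add: perm_mult_apply)
      ultimately show ?thesis using assms(2) k(1) by (auto intro!: image_eqI[of _ _ "k \<otimes>\<^bsub>PG\<^esub> s"])
    qed (use k in auto)
  qed (use assms(3) perm_closed in auto)
  ultimately show ?thesis using card_rotations card_image[of "\<lambda>r. r x" ?R] by simp
qed

lemma tau_sum_reflection_if_card_eq_n:
  assumes "card A = n"
  shows "\<not> rotation tau_sum"
proof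
  assume "rotation tau_sum"
  then obtain c where "c \<in> carrier PG" "tau_sum = c \<otimes>\<^bsub>PG\<^esub> c"
    using rotation_square[OF odd_n _ tau_sum_closed] by blast
  then show False using parity_tau_sum assms odd_n by (simp add: parity_mult)
qed

lemma tau_eq_one_or_tau_sum:
  assumes "\<not> rotation tau_sum" "z \<in> A" "tau_sum z = z" "y \<in> A"
  shows "\<tau> y \<in> {\<one>\<^bsub>PG\<^esub>, tau_sum}"
proof -
  have "\<tau> z = \<one>\<^bsub>PG\<^esub> \<or> \<tau> z = tau_sum"
    using centralizer_reflection[OF odd_n assms(1) tau_sum_closed _ tau_sum_commute_tau[OF assms(2,3)]]
      sigma_closed[OF assms(2)] by simp
  moreover obtain k where k: "k \<in> carrier PG" "k z = y" using transitive[OF assms(2,4)] by blast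
  moreover have "\<tau> y = lambda_map k (\<tau> z)" using lambda_map_tau[OF k(1) assms(2)] k(2) by simp
  ultimately show ?thesis using lambda_map_one lambda_map_tau_sum by auto
qed

lemma stabilizer_trivial:
  assumes "g \<in> carrier PG" "x \<in> A" "g x = x"
  shows "g = \<one>\<^bsub>PG\<^esub>"
proof (rule ccontr)
  assume "g \<noteq> \<one>\<^bsub>PG\<^esub>"
  then have g: "\<not> rotation g" using rotation_fixing_point_eq_one assms by blast
  then have s: "\<not> rotation tau_sum"
    using tau_sum_reflection_if_card_eq_n card_eq_n_if_reflection_fixes_point assms by blast
  obtain k where k: "k \<in> carrier PG" "k \<otimes>\<^bsub>PG\<^esub> g = tau_sum \<otimes>\<^bsub>PG\<^esub> k"
    using reflections_conjugate[OF odd_n g assms(1) s tau_sum_closed] by blast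
  have "tau_sum (k x) = (k \<otimes>\<^bsub>PG\<^esub> g) x" using k assms(2) tau_sum_closed by (simp add: perm_mult_apply)
  also have "\<dots> = k x" using k(1) assms by (simp add: perm_mult_apply)
  finally have "\<tau> y \<in> {\<one>\<^bsub>PG\<^esub>, tau_sum}" if "y \<in> A" for y
    using tau_eq_one_or_tau_sum[OF s perm_closed[OF k(1) assms(2)] _ that] by blast
  then have "carrier PG \<subseteq> {\<one>\<^bsub>PG\<^esub>, tau_sum}"
    by (rule carrier_subset_if_taus_in[OF tau_sum_closed reflection_square[OF s tau_sum_closed]])
  then have "card (carrier PG) \<le> card {\<one>\<^bsub>PG\<^esub>, tau_sum}" by (rule card_mono[rotated]) simp
  also have "\<dots> \<le> 2" by (simp add: card_insert_if)
  finally show False using card_carrier three_le_n by simp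
qed

lemma nonempty: "A \<noteq> {}"
proof
  assume "A = {}"
  have "g = \<one>\<^bsub>PG\<^esub>" if "g \<in> carrier PG" for g
    using that
  proof (induction rule: perm_group_induct)
    case (sigma x)
    with \<open>A = {}\<close> show ?case by blast
  next
    case (tau x)
    with \<open>A = {}\<close> show ?case by blast
  qed simp_all
  then have "carrier PG \<subseteq> {\<one>\<^bsub>PG\<^esub>}" by blast
  then have "card (carrier PG) \<le> card {\<one>\<^bsub>PG\<^esub>}" by (rule card_mono[rotated]) simp
  then show False using card_carrier three_le_n by simp
qed

lemma card_eq_twice_n: "card A = 2 * n"
proof -
  obtain x where x: "x \<in> A" using nonempty by blast
  have "inj_on (\<lambda>g. g x) (carrier PG)"
    using G.subgroup_self x stabilizer_trivial by (intro orbit_map_inj_on) auto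
  moreover have "(\<lambda>g. g x) ` carrier PG = A"
    using x transitive perm_closed by fastforce
  ultimately show ?thesis using card_carrier card_image[of "\<lambda>g. g x" "carrier PG"] by simp
qed

end

theorem theorem2:
  fixes A :: "'a set" and mu :: "'a \<Rightarrow> 'a \<Rightarrow> 'a" and n :: nat
  assumes "n \<ge> 3" and "odd n"
    and "cycle_set A mu"
    and "indecomposable A mu"
    and "perm_group A mu \<cong> dihedral_group n"
  shows "card A = 2 * n"
proof -
  interpret perm_cycle_set A mu by (rule perm_cycle_set.intro) fact
  obtain h where h: "h \<in> iso (perm_group A mu) (dihedral_group n)"
    using assms(5) by (auto simp: is_iso_def)
  interpret dihedral_iso "perm_group A mu" n h
    using G.is_group h by (simp add: dihedral_iso_def dihedral_iso_axioms_def)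
  have "finite A" using finite_if_indecomposable[OF assms(4) finite_carrier] .
  then interpret dihedral_cycle_set A mu n h
    using assms by unfold_locales
  show ?thesis by (rule card_eq_twice_n)
qed

end
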